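(* Let $c\in V$ be tight and let $x_1,x_2\ge 0$. Then (1) $\operatorname{proj}_X(\operatorname{proj}_X(c,x_1),x_2)=\operatorname{proj}_X(c,\min\{x_1,x_2\})$, and (2) $\operatorname{shrink}_X(\operatorname{shrink}_X(c,x_1),x_2)=\operatorname{shrink}_X(c,x_1+x_2)$.
   Context: $V$ is a finite dimensional real vector space with a positive definite symmetric bilinear form $\langle\cdot,\cdot\rangle$, $\|v\|_2=\sqrt{\langle v,v\rangle}$; $\|\cdot\|_X$ is a norm on $V$ with dual norm $\|v\|_Y=\max\{\langle v,w\rangle:\|w\|_X=1\}$. For $x\ge0$, $B_X(x)=\{v:\|v\|_X\le x\}$, $\operatorname{proj}_X(c,x)$ is the unique point of $B_X(x)$ closest to $c$ in $\|\cdot\|_2$, and $\operatorname{shrink}_X(c,x)=c-\operatorname{proj}_X(c,x)$. For norms $\|\cdot\|_P,\|\cdot\|_Q$ (among $X,Y,2$), $c=a+b$ is a $PQ$-decomposition if for every decomposition $c=a'+b'$: $\|a'\|_P>\|a\|_P$, or $\|b'\|_Q>\|b\|_Q$, or $(\|a'\|_P,\|b'\|_Q)=(\|a\|_P,\|b\|_Q)$. The vector $c$ is tight if every $X2$-decomposition of $c$ is an $XY$-decomposition. *)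

theory Defs
  imports "HOL-Analysis.Analysis"
begin

text \<open>V is modelled by a type of class euclidean_space (finite-dimensional real
inner product space; inner product = the positive definite form, norm = the 2-norm).\<close>

definition is_norm :: "('a::real_vector \<Rightarrow> real) \<Rightarrow> bool" where
  "is_norm N \<longleftrightarrow> (\<forall>v w. N (v + w) \<le> N v + N w) \<and> (\<forall>a v. N (a *\<^sub>R v) = \<bar>a\<bar> * N v)
     \<and> (\<forall>v. N v = 0 \<longleftrightarrow> v = 0)"

definition dual_norm :: "('a::real_inner \<Rightarrow> real) \<Rightarrow> 'a \<Rightarrow> real" where
  "dual_norm N v = Sup {inner v w | w. N w = 1}"

definition ballX :: "('a::real_vector \<Rightarrow> real) \<Rightarrow> real \<Rightarrow> 'a set" where
  "ballX N x = {v. N v \<le> x}"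

definition projX :: "('a::real_inner \<Rightarrow> real) \<Rightarrow> 'a \<Rightarrow> real \<Rightarrow> 'a" where
  "projX N c x = (THE p. p \<in> ballX N x \<and> (\<forall>q\<in>ballX N x. norm (c - p) \<le> norm (c - q)))"

definition shrinkX :: "('a::real_inner \<Rightarrow> real) \<Rightarrow> 'a \<Rightarrow> real \<Rightarrow> 'a" where
  "shrinkX N c x = c - projX N c x"

definition is_decomp :: "('a::real_vector \<Rightarrow> real) \<Rightarrow> ('a \<Rightarrow> real) \<Rightarrow> 'a \<Rightarrow> 'a \<Rightarrow> 'a \<Rightarrow> bool" where
  "is_decomp P Q c a b \<longleftrightarrow> c = a + b \<and>
     (\<forall>a' b'. c = a' + b' \<longrightarrow> P a' > P a \<or> Q b' > Q b \<or> (P a' = P a \<and> Q b' = Q b))"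

definition tight :: "('a::real_inner \<Rightarrow> real) \<Rightarrow> 'a \<Rightarrow> bool" where
  "tight N c \<longleftrightarrow> (\<forall>a b. is_decomp N norm c a b \<longrightarrow> is_decomp N (dual_norm N) c a b)"

end

theory Submission
  imports Defs
begin

text \<open>
  Write \<open>E\<^sub>c(s) = \<parallel>shrink\<^sub>X(c,s)\<parallel>\<^sup>2/2\<close>. Testing the variational inequality of
  \<open>proj\<^sub>X(c,s')\<close> against the points \<open>proj\<^sub>X(c,s) + (s'-s)w\<close> with \<open>\<parallel>w\<parallel>\<^sub>X = 1\<close> shows that
  \<open>E\<^sub>c\<close> has derivative \<open>-\<parallel>shrink\<^sub>X(c,s)\<parallel>\<^sub>Y\<close>, in the form of two-sided difference bounds.
  Tightness says that the residual of the projection has the least \<open>Y\<close>-norm among all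
  decompositions \<open>c = a + b\<close> with \<open>\<parallel>a\<parallel>\<^sub>X \<le> s\<close>. For \<open>v = shrink\<^sub>X(c,x\<^sub>1)\<close> the decomposition
  \<open>c = (proj\<^sub>X(c,x\<^sub>1) + proj\<^sub>X(v,\<tau>)) + shrink\<^sub>X(v,\<tau>)\<close> hence makes \<open>E\<^sub>v\<close> decrease at least as
  fast as \<open>\<tau> \<mapsto> E\<^sub>c(x\<^sub>1+\<tau>)\<close>; integrating gives \<open>\<parallel>shrink\<^sub>X(v,t)\<parallel>\<^sub>2 \<le> \<parallel>shrink\<^sub>X(c,x\<^sub>1+t)\<parallel>\<^sub>2\<close>, and
  uniqueness of the projection onto \<open>B\<^sub>X(x\<^sub>1+t)\<close> yields (2).
  For (1) with \<open>x\<^sub>2 \<le> x\<^sub>1\<close> and \<open>u = proj\<^sub>X(c,x\<^sub>1)\<close>, the same comparison on \<open>[x\<^sub>2,x\<^sub>1]\<close> between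
  \<open>E\<^sub>u\<close> and \<open>\<sigma> \<mapsto> \<parallel>u - proj\<^sub>X(c,\<sigma>)\<parallel>\<^sup>2/2\<close> shows that \<open>proj\<^sub>X(c,x\<^sub>2)\<close> is as close to \<open>u\<close> as
  \<open>proj\<^sub>X(u,x\<^sub>2)\<close>. Here (2) is what makes increments of \<open>proj\<^sub>X(c,\<cdot>)\<close> pair with \<open>shrink\<^sub>X(c,x\<^sub>1)\<close>
  at the maximal rate \<open>\<parallel>shrink\<^sub>X(c,x\<^sub>1)\<parallel>\<^sub>Y\<close>.
\<close>

text \<open>The two slope bounds evaluate \<open>l\<close> at opposite endpoints, so on a uniform partition
  their sums differ only by the telescoping term \<open>(b - a)(l a - l b)/n\<close>; no regularity of
  \<open>l\<close> is needed.\<close>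

lemma decrease_comparison:
  fixes f g l :: "real \<Rightarrow> real"
  assumes "a \<le> b"
    and f: "\<And>s s'. a \<le> s \<Longrightarrow> s \<le> s' \<Longrightarrow> s' \<le> b \<Longrightarrow> (s' - s) * l s' \<le> f s - f s'"
    and g: "\<And>s s'. a \<le> s \<Longrightarrow> s \<le> s' \<Longrightarrow> s' \<le> b \<Longrightarrow> g s - g s' \<le> (s' - s) * l s"
  shows "g a - g b \<le> f a - f b"
proof -
  have riemann: "(g a - g b) - (f a - f b) \<le> (b - a) * (l a - l b) / real n" if n: "n > 0" for n :: nat
  proof -
    define h where "h = (b - a) / real n"
    have h: "h \<ge> 0" "real n * h = b - a" using assms(1) n by (auto simp: h_def)
    have "(g a - g (a + real k * h)) - (f a - f (a + real k * h)) \<le> h * (l a - l (a + real k * h))"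
      if "k \<le> n" for k
      using that
    proof (induction k)
      case 0 then show ?case by simp
    next
      case (Suc k)
      define s where "s = a + real k * h"
      have next_s: "a + real (Suc k) * h = s + h" by (simp add: s_def algebra_simps)
      have "real (Suc k) * h \<le> real n * h" using Suc.prems h by (intro mult_right_mono) auto
      then have bounds: "a \<le> s" "s \<le> s + h" "s + h \<le> b" using h by (auto simp: s_def algebra_simps)
      show ?case
        using Suc.IH Suc.prems f[OF bounds] g[OF bounds]
        unfolding next_s s_def[symmetric] by (simp add: algebra_simps)
    qed
    from this[of n] show ?thesis using h by (simp add: h_def)
  qed
  have "(\<lambda>n. (b - a) * (l a - l b) / real n) \<longlonglongrightarrow> 0" by (rule lim_const_over_n)
  then have "(g a - g b) - (f a - f b) \<le> 0"
    by (rule LIMSEQ_le_const) (use riemann in \<open>auto intro!: exI[of _ 1]\<close>)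
  then show ?thesis by simp
qed

lemma inner_le_half_norm_sq_diff: "inner d (w::'a::real_inner) \<le> (norm (w + d))\<^sup>2 / 2 - (norm w)\<^sup>2 / 2"
  using inner_ge_zero[of d]
  by (simp add: power2_norm_eq_inner inner_add_left inner_add_right inner_commute field_simps)

lemma half_norm_sq_diff_le_inner: "(norm (w::'a::real_inner))\<^sup>2 / 2 - (norm (w - d))\<^sup>2 / 2 \<le> inner d w"
  using inner_ge_zero[of d]
  by (simp add: power2_norm_eq_inner inner_diff_left inner_diff_right inner_commute field_simps)

locale vector_norm =
  fixes N :: "'a::euclidean_space \<Rightarrow> real"
  assumes is_norm: "is_norm N"
begin

lemma triangle: "N (v + w) \<le> N v + N w"
  using is_norm unfolding is_norm_def by blast

lemma scaleR: "N (a *\<^sub>R v) = \<bar>a\<bar> * N v"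
  using is_norm unfolding is_norm_def by blast

lemma eq_0_iff: "N v = 0 \<longleftrightarrow> v = 0"
  using is_norm unfolding is_norm_def by blast

lemma zero [simp]: "N 0 = 0"
  using eq_0_iff by blast

lemma nonneg: "0 \<le> N v"
  using triangle[of v "- v"] scaleR[of "-1" v] by simp

lemma pos: "v \<noteq> 0 \<Longrightarrow> 0 < N v"
  using nonneg[of v] eq_0_iff[of v] by linarith

lemma convex_on: "convex_on UNIV N"
proof (rule convex_onI)
  fix t :: real and x y assume t: "0 < t" "t < 1"
  have "N ((1 - t) *\<^sub>R x + t *\<^sub>R y) \<le> N ((1 - t) *\<^sub>R x) + N (t *\<^sub>R y)" by (rule triangle)
  also have "\<dots> = (1 - t) * N x + t * N y" using t by (simp add: scaleR)
  finally show "N ((1 - t) *\<^sub>R x + t *\<^sub>R y) \<le> (1 - t) * N x + t * N y" .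
qed simp

lemma continuous_on: "continuous_on UNIV N"
  using convex_on_continuous[OF open_UNIV convex_on] .

lemma closed_ballX: "closed (ballX N s)"
  unfolding ballX_def by (rule closed_Collect_le[OF continuous_on continuous_on_const])

lemma convex_ballX: "convex (ballX N s)"
  unfolding convex_alt ballX_def
proof (intro ballI allI impI, clarsimp)
  fix x y and t :: real assume "N x \<le> s" "N y \<le> s" "0 \<le> t" "t \<le> 1"
  then have "(1 - t) * N x + t * N y \<le> (1 - t) * s + t * s"
    by (intro add_mono mult_left_mono) auto
  then show "N ((1 - t) *\<^sub>R x + t *\<^sub>R y) \<le> s"
    using convex_onD[OF convex_on, of t x y] \<open>0 \<le> t\<close> \<open>t \<le> 1\<close> by (simp add: algebra_simps)
qed

lemma zero_in_ballX: "0 \<le> s \<Longrightarrow> 0 \<in> ballX N s"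
  by (simp add: ballX_def)

lemma norm_le_N: "\<exists>m>0. \<forall>v. m * norm v \<le> N v"
proof -
  have "sphere (0::'a) 1 \<noteq> {}" by simp
  then obtain u where "u \<in> sphere 0 1" "\<forall>v\<in>sphere 0 1. N u \<le> N v"
    using continuous_attains_inf[OF compact_sphere _ continuous_on_subset[OF continuous_on subset_UNIV]]
    by blast
  then have u: "norm u = 1" "\<And>v. norm v = 1 \<Longrightarrow> N u \<le> N v" by auto
  have "N u * norm v \<le> N v" for v
  proof (cases "v = 0")
    case False
    then have "N u \<le> N ((1 / norm v) *\<^sub>R v)" by (intro u(2)) simp
    then show ?thesis using False by (simp add: scaleR field_simps)
  qed simp
  moreover have "0 < N u" using u(1) pos[of u] by (cases "u = 0") auto
  ultimately show ?thesis by blast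
qed

lemma exists_unit: "\<exists>w. N w = 1"
proof -
  obtain v :: 'a where "v \<noteq> 0" using vector_choose_size[of 1] by force
  then have "N ((1 / N v) *\<^sub>R v) = 1" using pos[of v] by (simp add: scaleR)
  then show ?thesis by blast
qed

lemma bdd_above_inner_unit: "bdd_above {inner v w | w. N w = 1}"
proof -
  obtain m where m: "m > 0" "\<And>w. m * norm w \<le> N w" using norm_le_N by blast
  have "inner v w \<le> norm v / m" if "N w = 1" for w
  proof -
    have "norm w \<le> 1 / m" using m(2)[of w] that m(1) by (simp add: field_simps)
    then have "norm v * norm w \<le> norm v * (1 / m)" by (intro mult_left_mono) auto
    then show ?thesis using norm_cauchy_schwarz[of v w] by simp
  qed
  then show ?thesis unfolding bdd_above_def by blast
qed

lemma inner_le_dual_norm: "N w = 1 \<Longrightarrow> inner v w \<le> dual_norm N v"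
  unfolding dual_norm_def by (rule cSup_upper[OF _ bdd_above_inner_unit]) blast

lemma dual_norm_le: "(\<And>w. N w = 1 \<Longrightarrow> inner v w \<le> K) \<Longrightarrow> dual_norm N v \<le> K"
  unfolding dual_norm_def using exists_unit by (intro cSup_least) auto

lemma dual_norm_nonneg: "0 \<le> dual_norm N v"
proof -
  obtain w where w: "N w = 1" using exists_unit by blast
  then have "N (- w) = 1" using scaleR[of "-1" w] by simp
  then show ?thesis
    using inner_le_dual_norm[OF w, of v] inner_le_dual_norm[of "- w" v] by simp
qed

lemma inner_le_mult_dual_norm: "inner w v \<le> N w * dual_norm N v"
proof (cases "w = 0")
  case False
  then have "N ((1 / N w) *\<^sub>R w) = 1" using pos[of w] by (simp add: scaleR)
  then have "inner v ((1 / N w) *\<^sub>R w) \<le> dual_norm N v" by (rule inner_le_dual_norm)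
  then show ?thesis using pos[OF False] by (simp add: field_simps inner_commute)
qed simp

lemma inner_le_mult_dual_norm_of_le: "N w \<le> s \<Longrightarrow> inner w v \<le> s * dual_norm N v"
  using inner_le_mult_dual_norm[of w v] mult_right_mono[OF _ dual_norm_nonneg] by (meson order.trans)

lemma dual_norm_triangle: "dual_norm N (v + w) \<le> dual_norm N v + dual_norm N w"
  by (rule dual_norm_le) (simp add: inner_add_left add_mono inner_le_dual_norm)

lemma projX_eq_closest_point: "0 \<le> s \<Longrightarrow> projX N c s = closest_point (ballX N s) c"
  unfolding projX_def
proof (rule the_equality)
  assume "0 \<le> s"
  then have "ballX N s \<noteq> {}" using zero_in_ballX by blast
  then show "closest_point (ballX N s) c \<in> ballX N s \<and>
      (\<forall>q\<in>ballX N s. norm (c - closest_point (ballX N s) c) \<le> norm (c - q))"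
    using closest_point_in_set[OF closed_ballX] closest_point_le[OF closed_ballX]
    by (auto simp: dist_norm)
next
  fix p assume "p \<in> ballX N s \<and> (\<forall>q\<in>ballX N s. norm (c - p) \<le> norm (c - q))"
  then show "p = closest_point (ballX N s) c"
    by (intro closest_point_unique[OF convex_ballX closed_ballX]) (auto simp: dist_norm)
qed

lemma projX_in: "0 \<le> s \<Longrightarrow> N (projX N c s) \<le> s"
  using projX_eq_closest_point closest_point_in_set[OF closed_ballX] zero_in_ballX
  by (fastforce simp: ballX_def)

lemma projX_nearest: "0 \<le> s \<Longrightarrow> N q \<le> s \<Longrightarrow> norm (c - projX N c s) \<le> norm (c - q)"
  using projX_eq_closest_point closest_point_le[OF closed_ballX, of q s c]
  by (auto simp: ballX_def dist_norm)

lemma projX_unique: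
  "0 \<le> s \<Longrightarrow> N p \<le> s \<Longrightarrow> (\<And>q. N q \<le> s \<Longrightarrow> norm (c - p) \<le> norm (c - q)) \<Longrightarrow> projX N c s = p"
  using projX_eq_closest_point closest_point_unique[OF convex_ballX closed_ballX, of p s c]
  by (auto simp: ballX_def dist_norm)

lemma projX_variational: "0 \<le> s \<Longrightarrow> N q \<le> s \<Longrightarrow> inner (c - projX N c s) (q - projX N c s) \<le> 0"
  using projX_eq_closest_point closest_point_dot[OF convex_ballX closed_ballX, of q s c]
  by (auto simp: ballX_def)

lemma projX_self: "0 \<le> s \<Longrightarrow> N c \<le> s \<Longrightarrow> projX N c s = c"
  by (rule projX_unique) auto

lemma projX_zero: "projX N c 0 = 0"
proof -
  have "N (projX N c 0) = 0" using projX_in[of 0 c] nonneg[of "projX N c 0"] by linarith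
  then show ?thesis by (simp add: eq_0_iff)
qed

lemma projX_eq_if_norm_le:
  assumes s: "0 \<le> s" and "N p \<le> s" and "norm (c - p) \<le> norm (shrinkX N c s)"
  shows "projX N c s = p"
  using assms projX_nearest[OF s, of _ c] by (intro projX_unique[OF s]) (force simp: shrinkX_def)+

lemma N_projX_add_projX_le:
  "0 \<le> s \<Longrightarrow> 0 \<le> t \<Longrightarrow> N (projX N c s + projX N v t) \<le> s + t"
  using triangle[of "projX N c s" "projX N v t"] projX_in[of s c] projX_in[of t v] by linarith

lemma projX_eq_self_if_interior:
  assumes s: "0 \<le> s" and interior: "N (projX N c s) < s"
  shows "projX N c s = c"
proof (rule ccontr)
  let ?p = "projX N c s" and ?r = "c - projX N c s"
  assume "?p \<noteq> c"
  then have r: "0 < N ?r" using pos by simp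
  define e where "e = min 1 ((s - N ?p) / N ?r)"
  have e: "0 < e" "e * N ?r \<le> s - N ?p"
    using r interior by (auto simp: e_def min_def field_simps)
  have "N (?p + e *\<^sub>R ?r) \<le> N ?p + e * N ?r"
    using triangle[of ?p "e *\<^sub>R ?r"] e(1) by (simp add: scaleR)
  then have "inner ?r ((?p + e *\<^sub>R ?r) - ?p) \<le> 0"
    using e(2) by (intro projX_variational[OF s]) linarith
  then have "inner ?r ?r \<le> 0" using e(1) by (simp add: mult_le_0_iff)
  then have "?r = 0" by (metis inner_gt_zero_iff not_le)
  then show False using \<open>?p \<noteq> c\<close> by simp
qed

lemma is_decomp_projX:
  assumes s: "0 \<le> s"
  shows "is_decomp N norm c (projX N c s) (shrinkX N c s)"
  unfolding is_decomp_def
proof (intro conjI allI impI)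
  show "c = projX N c s + shrinkX N c s" by (simp add: shrinkX_def)
  fix a b assume c: "c = a + b"
  have nearest: "norm (shrinkX N c s) \<le> norm b" if "N a \<le> s"
    using projX_nearest[OF s that, of c] c by (simp add: shrinkX_def)
  have equal: "projX N c s = a" if "N a \<le> s" "norm b = norm (shrinkX N c s)"
    using projX_eq_if_norm_le[OF s that(1)] that(2) c by simp
  show "N (projX N c s) < N a \<or> norm (shrinkX N c s) < norm b \<or>
        N a = N (projX N c s) \<and> norm b = norm (shrinkX N c s)"
    using nearest equal projX_in[OF s, of c] by fastforce
qed

text \<open>If the projection lies in the interior of the ball the residual vanishes; otherwise
  tightness turns the \<open>X2\<close>-decomposition given by the projection into an \<open>XY\<close>-decomposition.\<close>

lemma tight_dual_norm_shrinkX_le: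
  assumes "tight N c" and s: "0 \<le> s" and "c = a + b" and "N a \<le> s"
  shows "dual_norm N (shrinkX N c s) \<le> dual_norm N b"
proof (cases "N (projX N c s) < s")
  case True
  then have "shrinkX N c s = 0"
    using projX_eq_self_if_interior[OF s True] by (simp add: shrinkX_def)
  then show ?thesis using dual_norm_nonneg[of b] dual_norm_le[of 0 0] by simp
next
  case False
  then have "N a \<le> N (projX N c s)" using assms(4) by linarith
  moreover have "is_decomp N (dual_norm N) c (projX N c s) (shrinkX N c s)"
    using assms(1) is_decomp_projX[OF s] unfolding tight_def by blast
  ultimately show ?thesis using assms(3) unfolding is_decomp_def by force
qed

lemma inner_projX_diff_shrinkX_ge:
  assumes s: "0 \<le> s" and s': "s \<le> s'"
  shows "(s' - s) * dual_norm N (shrinkX N c s') \<le> inner (projX N c s' - projX N c s) (shrinkX N c s')"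
proof (cases "s = s'")
  case False
  then have h: "0 < s' - s" using s' by simp
  have "dual_norm N (shrinkX N c s') \<le> inner (projX N c s' - projX N c s) (shrinkX N c s') / (s' - s)"
  proof (rule dual_norm_le)
    fix w assume w: "N w = 1"
    have "N (projX N c s + (s' - s) *\<^sub>R w) \<le> s'"
      using triangle[of "projX N c s" "(s' - s) *\<^sub>R w"] projX_in[OF s, of c] w h by (simp add: scaleR)
    then have "inner (c - projX N c s') ((projX N c s + (s' - s) *\<^sub>R w) - projX N c s') \<le> 0"
      using s s' by (intro projX_variational) auto
    then have "(s' - s) * inner (shrinkX N c s') w \<le> inner (projX N c s' - projX N c s) (shrinkX N c s')"
      by (simp add: shrinkX_def inner_diff_right inner_add_right inner_diff_left inner_commute algebra_simps)
    then show "inner (shrinkX N c s') w \<le> inner (projX N c s' - projX N c s) (shrinkX N c s') / (s' - s)"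
      using h by (simp add: field_simps)
  qed
  then show ?thesis using h by (simp add: field_simps)
qed simp

lemma inner_projX_diff_shrinkX_le:
  assumes s: "0 \<le> s" and s': "s \<le> s'"
  shows "inner (projX N c s' - projX N c s) (shrinkX N c s) \<le> (s' - s) * dual_norm N (shrinkX N c s)"
proof -
  have "inner (projX N c s') (shrinkX N c s) \<le> s' * dual_norm N (shrinkX N c s)"
    using s s' by (intro inner_le_mult_dual_norm_of_le projX_in) simp
  moreover have "s * dual_norm N (shrinkX N c s) \<le> inner (projX N c s) (shrinkX N c s)"
    using inner_projX_diff_shrinkX_ge[OF order_refl s, of c] by (simp add: projX_zero)
  ultimately show ?thesis by (simp add: inner_diff_left algebra_simps)
qed

lemma norm_shrinkX_decrease_ge:
  assumes "0 \<le> s" and "s \<le> s'"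
  shows "(s' - s) * dual_norm N (shrinkX N c s') \<le> (norm (shrinkX N c s))\<^sup>2 / 2 - (norm (shrinkX N c s'))\<^sup>2 / 2"
  using inner_projX_diff_shrinkX_ge[OF assms, of c]
    inner_le_half_norm_sq_diff[of "projX N c s' - projX N c s" "shrinkX N c s'"]
  by (simp add: shrinkX_def)

lemma norm_shrinkX_decrease_le:
  assumes "0 \<le> s" and "s \<le> s'"
  shows "(norm (shrinkX N c s))\<^sup>2 / 2 - (norm (shrinkX N c s'))\<^sup>2 / 2 \<le> (s' - s) * dual_norm N (shrinkX N c s)"
  using inner_projX_diff_shrinkX_le[OF assms, of c]
    half_norm_sq_diff_le_inner[of "shrinkX N c s" "projX N c s' - projX N c s"]
  by (simp add: shrinkX_def)

lemma shrinkX_shrinkX: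
  assumes tight: "tight N c" and x: "0 \<le> x" and t: "0 \<le> t"
  shows "shrinkX N (shrinkX N c x) t = shrinkX N c (x + t)"
proof -
  define v where "v = shrinkX N c x"
  have c_split: "c = (projX N c x + projX N v \<tau>) + shrinkX N v \<tau>" for \<tau>
    by (simp add: v_def shrinkX_def)
  have "(norm (shrinkX N c (x + 0)))\<^sup>2 / 2 - (norm (shrinkX N c (x + t)))\<^sup>2 / 2
      \<le> (norm (shrinkX N v 0))\<^sup>2 / 2 - (norm (shrinkX N v t))\<^sup>2 / 2"
  proof (rule decrease_comparison[where f = "\<lambda>\<tau>. (norm (shrinkX N v \<tau>))\<^sup>2 / 2"
        and g = "\<lambda>\<tau>. (norm (shrinkX N c (x + \<tau>)))\<^sup>2 / 2"
        and l = "\<lambda>\<tau>. dual_norm N (shrinkX N c (x + \<tau>))", OF t])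
    fix s s' assume s: "0 \<le> s" "s \<le> s'" "s' \<le> t"
    have "dual_norm N (shrinkX N c (x + s')) \<le> dual_norm N (shrinkX N v s')"
      using tight_dual_norm_shrinkX_le[OF tight _ c_split N_projX_add_projX_le] x s by simp
    then have "(s' - s) * dual_norm N (shrinkX N c (x + s')) \<le> (s' - s) * dual_norm N (shrinkX N v s')"
      using s by (intro mult_left_mono) auto
    also have "\<dots> \<le> (norm (shrinkX N v s))\<^sup>2 / 2 - (norm (shrinkX N v s'))\<^sup>2 / 2"
      using norm_shrinkX_decrease_ge s by simp
    finally show "(s' - s) * dual_norm N (shrinkX N c (x + s')) \<le>
        (norm (shrinkX N v s))\<^sup>2 / 2 - (norm (shrinkX N v s'))\<^sup>2 / 2" .
    show "(norm (shrinkX N c (x + s)))\<^sup>2 / 2 - (norm (shrinkX N c (x + s')))\<^sup>2 / 2 \<le>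
        (s' - s) * dual_norm N (shrinkX N c (x + s))"
      using norm_shrinkX_decrease_le[of "x + s" "x + s'" c] x s by simp
  qed
  then have "(norm (shrinkX N v t))\<^sup>2 \<le> (norm (shrinkX N c (x + t)))\<^sup>2"
    by (simp add: shrinkX_def projX_zero v_def)
  then have "norm (shrinkX N v t) \<le> norm (shrinkX N c (x + t))"
    by (rule power2_le_imp_le) simp
  moreover have "c - (projX N c x + projX N v t) = shrinkX N v t"
    by (simp add: v_def shrinkX_def)
  ultimately have "norm (c - (projX N c x + projX N v t)) \<le> norm (shrinkX N c (x + t))"
    by simp
  then have "projX N c (x + t) = projX N c x + projX N v t"
    using projX_eq_if_norm_le[OF _ N_projX_add_projX_le[OF x t]] x t by simp
  then show ?thesis by (simp add: shrinkX_def v_def)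
qed

lemma tight_inner_projX_diff_shrinkX_ge:
  assumes tight: "tight N c" and s: "0 \<le> s" and s': "s \<le> s'" and y: "s' \<le> y"
  shows "(s' - s) * dual_norm N (shrinkX N c y) \<le> inner (projX N c s' - projX N c s) (shrinkX N c y)"
proof -
  define r where "r = shrinkX N c y"
  define e where "e = projX N (shrinkX N c s') (y - s')"
  have "shrinkX N (shrinkX N c s') (y - s') = r"
    using shrinkX_shrinkX[OF tight, of s' "y - s'"] s s' y by (simp add: r_def)
  then have py: "projX N c y = projX N c s' + e"
    by (simp add: r_def e_def shrinkX_def algebra_simps)
  have "y * dual_norm N r \<le> inner (projX N c y) r"
    using inner_projX_diff_shrinkX_ge[of 0 y c] s s' y by (simp add: r_def projX_zero)
  moreover have "inner e r \<le> (y - s') * dual_norm N r"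
    using y unfolding e_def by (intro inner_le_mult_dual_norm_of_le projX_in) simp
  moreover have "inner (projX N c s) r \<le> s * dual_norm N r"
    using s by (intro inner_le_mult_dual_norm_of_le projX_in)
  ultimately show ?thesis
    unfolding r_def[symmetric] py by (simp add: inner_diff_left inner_add_left algebra_simps)
qed

lemma projX_projX_le:
  assumes tight: "tight N c" and x2: "0 \<le> x2" and x12: "x2 \<le> x1"
  shows "projX N (projX N c x1) x2 = projX N c x2"
proof -
  define u where "u = projX N c x1"
  have x1: "0 \<le> x1" using x2 x12 by simp
  have c_split: "c = projX N u \<sigma> + (shrinkX N u \<sigma> + shrinkX N c x1)" for \<sigma>
    by (simp add: u_def shrinkX_def)
  have "(norm (u - projX N c x2))\<^sup>2 / 2 - (norm (u - projX N c x1))\<^sup>2 / 2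
      \<le> (norm (shrinkX N u x2))\<^sup>2 / 2 - (norm (shrinkX N u x1))\<^sup>2 / 2"
  proof (rule decrease_comparison[where f = "\<lambda>\<sigma>. (norm (shrinkX N u \<sigma>))\<^sup>2 / 2"
        and g = "\<lambda>\<sigma>. (norm (u - projX N c \<sigma>))\<^sup>2 / 2"
        and l = "\<lambda>\<sigma>. dual_norm N (shrinkX N c \<sigma>) - dual_norm N (shrinkX N c x1)", OF x12])
    fix s s' assume s: "x2 \<le> s" "s \<le> s'" "s' \<le> x1"
    have "dual_norm N (shrinkX N c s') \<le> dual_norm N (shrinkX N u s' + shrinkX N c x1)"
      using tight_dual_norm_shrinkX_le[OF tight _ c_split projX_in] x2 s by simp
    also have "\<dots> \<le> dual_norm N (shrinkX N u s') + dual_norm N (shrinkX N c x1)"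
      by (rule dual_norm_triangle)
    finally have "(s' - s) * (dual_norm N (shrinkX N c s') - dual_norm N (shrinkX N c x1))
        \<le> (s' - s) * dual_norm N (shrinkX N u s')"
      using s by (intro mult_left_mono) auto
    also have "\<dots> \<le> (norm (shrinkX N u s))\<^sup>2 / 2 - (norm (shrinkX N u s'))\<^sup>2 / 2"
      using norm_shrinkX_decrease_ge x2 s by simp
    finally show "(s' - s) * (dual_norm N (shrinkX N c s') - dual_norm N (shrinkX N c x1))
        \<le> (norm (shrinkX N u s))\<^sup>2 / 2 - (norm (shrinkX N u s'))\<^sup>2 / 2" .
    have "(norm (u - projX N c s))\<^sup>2 / 2 - (norm (u - projX N c s'))\<^sup>2 / 2
        \<le> inner (projX N c s' - projX N c s) (shrinkX N c s - shrinkX N c x1)"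
      using half_norm_sq_diff_le_inner[of "u - projX N c s" "projX N c s' - projX N c s"]
      by (simp add: u_def shrinkX_def)
    also have "\<dots> \<le> (s' - s) * (dual_norm N (shrinkX N c s) - dual_norm N (shrinkX N c x1))"
      using inner_projX_diff_shrinkX_le[of s s' c] tight_inner_projX_diff_shrinkX_ge[OF tight _ s(2,3)]
        x2 s by (simp add: inner_diff_right right_diff_distrib)
    finally show "(norm (u - projX N c s))\<^sup>2 / 2 - (norm (u - projX N c s'))\<^sup>2 / 2
        \<le> (s' - s) * (dual_norm N (shrinkX N c s) - dual_norm N (shrinkX N c x1))" .
  qed
  moreover have "shrinkX N u x1 = 0"
    using projX_self[OF x1 projX_in[OF x1]] by (simp add: u_def shrinkX_def)
  ultimately have "(norm (u - projX N c x2))\<^sup>2 \<le> (norm (shrinkX N u x2))\<^sup>2"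
    by (simp add: u_def)
  then have "norm (u - projX N c x2) \<le> norm (shrinkX N u x2)"
    by (rule power2_le_imp_le) simp
  then show ?thesis
    unfolding u_def by (rule projX_eq_if_norm_le[OF x2 projX_in[OF x2]])
qed

lemma projX_projX:
  assumes "tight N c" and "0 \<le> x1" and "0 \<le> x2"
  shows "projX N (projX N c x1) x2 = projX N c (min x1 x2)"
proof (cases "x1 \<le> x2")
  case True
  then show ?thesis
    using projX_self[OF assms(3)] projX_in[OF assms(2), of c] by (simp add: min_def)
qed (use projX_projX_le[OF assms(1,3)] in simp)

end

theorem proposition2p11:
  fixes N :: "'a::euclidean_space \<Rightarrow> real" and c :: 'a and x1 x2 :: real
  assumes "is_norm N" and "tight N c" and "x1 \<ge> 0" and "x2 \<ge> 0"
  shows "projX N (projX N c x1) x2 = projX N c (min x1 x2) \<and>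
         shrinkX N (shrinkX N c x1) x2 = shrinkX N c (x1 + x2)"
proof -
  interpret vector_norm N by (rule vector_norm.intro) (fact assms(1))
  show ?thesis
    using projX_projX[OF assms(2-4)] shrinkX_shrinkX[OF assms(2-4)] by simp
qed

end
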